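(* Let $\varrho,\sigma$ be density operators on a finite-dimensional Hilbert space and $\alpha>0$. If $\frac1nD_\alpha^{\mathrm{test}}(\varrho^{\otimes n}\|\sigma^{\otimes n})<\hat D_\alpha^{\mathrm{test}}(\varrho\|\sigma)$ for all $n\in\mathbb N$, then $\overline{D}_\alpha^{\mathrm{test}}(\varrho\|\sigma)=\hat D_\alpha^{\mathrm{test}}(\varrho\|\sigma)$. Equivalently, if $\overline{D}_\alpha^{\mathrm{test}}(\varrho\|\sigma)<\hat D_\alpha^{\mathrm{test}}(\varrho\|\sigma)$, then there exists $n\in\mathbb N$ with $\frac1nD_\alpha^{\mathrm{test}}(\varrho^{\otimes n}\|\sigma^{\otimes n})=\hat D_\alpha^{\mathrm{test}}(\varrho\|\sigma)$.
   Context: For probability vectors $p,q$, $D_\alpha$ is the classical Rényi divergence ($\frac{1}{\alpha-1}\log\sum_xp(x)^\alpha q(x)^{1-\alpha}$, with the usual conventions for $\alpha\ge1$). A test is an operator $0\le T\le I$; $\mathcal T(X):=(\operatorname{Tr}XT,\operatorname{Tr}X(I-T))$; $D_\alpha^{\mathrm{test}}(\varrho\|\sigma):=\sup_{0\le T\le I}D_\alpha(\mathcal T(\varrho)\|\mathcal T(\sigma))$; $\overline{D}_\alpha^{\mathrm{test}}:=\limsup_n\frac1nD_\alpha^{\mathrm{test}}(\varrho^{\otimes n}\|\sigma^{\otimes n})$; $\hat D_\alpha^{\mathrm{test}}:=\sup_n\frac1nD_\alpha^{\mathrm{test}}(\varrho^{\otimes n}\|\sigma^{\otimes n})$. *)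

theory Defs
  imports "HOL-Analysis.Analysis" "Jordan_Normal_Form.Matrix"
begin

text \<open>Conventions: for 0 < alpha < 1 the formula with 0 powr s = 0, and
  log 0 = -infinity (giving +infinity); for alpha = 1 the relative entropy
  sum p ln (p/q), +infinity unless supp p is contained in supp q;
  for alpha > 1 +infinity unless supp p is contained in supp q.\<close>

definition renyi_div :: "real \<Rightarrow> 'x set \<Rightarrow> ('x \<Rightarrow> real) \<Rightarrow> ('x \<Rightarrow> real) \<Rightarrow> ereal" where
  "renyi_div \<alpha> X p q =
     (if \<alpha> < 1 then
        (let s = (\<Sum>x\<in>X. p x powr \<alpha> * q x powr (1 - \<alpha>)) in
         if s = 0 then \<infinity> else ereal (ln s / (\<alpha> - 1)))
      else if (\<exists>x\<in>X. p x > 0 \<and> q x = 0) then \<infinity>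
      else if \<alpha> = 1 then ereal (\<Sum>x\<in>{x\<in>X. p x > 0}. p x * ln (p x / q x))
      else ereal (ln (\<Sum>x\<in>{x\<in>X. p x > 0}. p x powr \<alpha> * q x powr (1 - \<alpha>)) / (\<alpha> - 1)))"

definition cadj :: "complex mat \<Rightarrow> complex mat" where
  "cadj A = mat (dim_col A) (dim_row A) (\<lambda>(i,j). cnj (A $$ (j,i)))"

definition ctrace :: "complex mat \<Rightarrow> complex" where
  "ctrace A = (\<Sum>i<dim_row A. A $$ (i,i))"

definition psd :: "nat \<Rightarrow> complex mat \<Rightarrow> bool" where
  "psd d A \<longleftrightarrow> A \<in> carrier_mat d d \<and> cadj A = A \<and>
     (\<forall>v\<in>carrier_vec d. 0 \<le> Re (\<Sum>i<d. cnj (v $ i) * (A *\<^sub>v v) $ i))"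

definition density_op :: "nat \<Rightarrow> complex mat \<Rightarrow> bool" where
  "density_op d \<rho> \<longleftrightarrow> psd d \<rho> \<and> ctrace \<rho> = 1"

definition is_test :: "nat \<Rightarrow> complex mat \<Rightarrow> bool" where
  "is_test d T \<longleftrightarrow> psd d T \<and> psd d (1\<^sub>m d - T)"

definition kron :: "complex mat \<Rightarrow> complex mat \<Rightarrow> complex mat" where
  "kron A B = mat (dim_row A * dim_row B) (dim_col A * dim_col B)
     (\<lambda>(i,j). A $$ (i div dim_row B, j div dim_col B) * B $$ (i mod dim_row B, j mod dim_col B))"

fun tensor_pow :: "complex mat \<Rightarrow> nat \<Rightarrow> complex mat" where
  "tensor_pow A 0 = 1\<^sub>m 1"
| "tensor_pow A (Suc n) = kron (tensor_pow A n) A"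

text \<open>The binary measurement channel X \<mapsto> (Tr XT, Tr X(I-T)); outcome True = T.\<close>
definition test_meas :: "complex mat \<Rightarrow> complex mat \<Rightarrow> bool \<Rightarrow> real" where
  "test_meas T X b = (if b then Re (ctrace (X * T)) else Re (ctrace (X * (1\<^sub>m (dim_row X) - T))))"

definition D_test :: "real \<Rightarrow> complex mat \<Rightarrow> complex mat \<Rightarrow> ereal" where
  "D_test \<alpha> \<rho> \<sigma> = (SUP T\<in>{T. is_test (dim_row \<rho>) T}.
      renyi_div \<alpha> UNIV (test_meas T \<rho>) (test_meas T \<sigma>))"

definition D_test_n :: "real \<Rightarrow> complex mat \<Rightarrow> complex mat \<Rightarrow> nat \<Rightarrow> ereal" where
  "D_test_n \<alpha> \<rho> \<sigma> n = D_test \<alpha> (tensor_pow \<rho> n) (tensor_pow \<sigma> n) / ereal (real n)"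

definition D_test_bar :: "real \<Rightarrow> complex mat \<Rightarrow> complex mat \<Rightarrow> ereal" where
  "D_test_bar \<alpha> \<rho> \<sigma> = limsup (D_test_n \<alpha> \<rho> \<sigma>)"

definition D_test_hat :: "real \<Rightarrow> complex mat \<Rightarrow> complex mat \<Rightarrow> ereal" where
  "D_test_hat \<alpha> \<rho> \<sigma> = (SUP n\<in>{1..}. D_test_n \<alpha> \<rho> \<sigma> n)"

end

theory Submission
  imports Defs
begin

text \<open>If no term of a sequence attains its supremum, then neither does the maximum of any
  finite initial segment, so every tail of the sequence has the same supremum; the limsup, being
  the infimum of the tail suprema, equals it.\<close>

lemma SUP_atLeast_eq_if_unattained:
  fixes a :: "nat \<Rightarrow> 'a::complete_linorder"
  assumes unattained: "\<forall>n\<ge>k. a n < (SUP n\<in>{k..}. a n)" and "k \<le> N"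
  shows "(SUP n\<in>{N..}. a n) = (SUP n\<in>{k..}. a n)"
proof (cases "N = k")
  case False
  let ?S = "SUP n\<in>{k..}. a n"
  have "{k..} = {k..<N} \<union> {N..}" using \<open>k \<le> N\<close> by auto
  then have split: "?S = sup (SUP n\<in>{k..<N}. a n) (SUP n\<in>{N..}. a n)"
    by (simp only: SUP_union)
  have "{k..<N} \<noteq> {}" using False \<open>k \<le> N\<close> by simp
  then have "(SUP n\<in>{k..<N}. a n) < ?S"
    using unattained by (subst finite_Sup_less_iff) auto
  then show ?thesis using split by (simp add: sup_max max_def split: if_splits)
qed simp

lemma limsup_eq_SUP_if_unattained:
  fixes a :: "nat \<Rightarrow> 'a::complete_linorder"
  assumes unattained: "\<forall>n\<ge>k. a n < (SUP n\<in>{k..}. a n)"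
  shows "limsup a = (SUP n\<in>{k..}. a n)"
proof (rule antisym)
  show "limsup a \<le> (SUP n\<in>{k..}. a n)"
    unfolding limsup_INF_SUP by (rule INF_lower) simp
  show "(SUP n\<in>{k..}. a n) \<le> limsup a"
    unfolding limsup_INF_SUP
  proof (rule INF_greatest)
    fix N :: nat
    have "(SUP n\<in>{k..}. a n) = (SUP n\<in>{max N k..}. a n)"
      by (rule SUP_atLeast_eq_if_unattained[OF unattained, symmetric]) simp
    also have "\<dots> \<le> (SUP n\<in>{N..}. a n)"
      by (rule SUP_subset_mono) auto
    finally show "(SUP n\<in>{k..}. a n) \<le> (SUP n\<in>{N..}. a n)" .
  qed
qed

theorem mainTheorem16:
  fixes \<rho> \<sigma> :: "complex mat" and d :: nat and \<alpha> :: real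
  assumes "density_op d \<rho>" and "density_op d \<sigma>" and "\<alpha> > 0"
    and "\<forall>n\<ge>1. D_test_n \<alpha> \<rho> \<sigma> n < D_test_hat \<alpha> \<rho> \<sigma>"
  shows "D_test_bar \<alpha> \<rho> \<sigma> = D_test_hat \<alpha> \<rho> \<sigma>"
  using limsup_eq_SUP_if_unattained[of 1 "D_test_n \<alpha> \<rho> \<sigma>"] assms(4)
  unfolding D_test_bar_def D_test_hat_def by simp

end
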